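(* Consider a Bayesian model with parameter $\theta$, prior $P(\theta)$, and data $\mathcal{D}=(\mathcal{D}_i)_{i=1}^n$ whose elements are conditionally independent given $\theta$ with likelihoods $P(\mathcal{D}_i\mid\theta)$. For each $i$, let $\theta^i_1,\dots,\theta^i_k$ be i.i.d. samples from the posterior $P(\theta\mid\mathcal{D}_{<i})$, and define $$\hat{\mathcal{L}}(\mathcal{D})=\sum_{i=1}^n\frac1k\sum_{j=1}^k\log P(\mathcal{D}_i\mid\theta^i_j),\qquad \hat{\mathcal{L}}_k(\mathcal{D})=\sum_{i=1}^n\log\frac1k\sum_{j=1}^kP(\mathcal{D}_i\mid\theta^i_j).$$ Let $\mathcal{L}(\mathcal{D})=\sum_{i=1}^n\mathbb{E}_{\theta\sim P(\theta\mid\mathcal{D}_{<i})}[\log P(\mathcal{D}_i\mid\theta)]$ and $\mathcal{L}_k(\mathcal{D})=\mathbb{E}[\hat{\mathcal{L}}_k(\mathcal{D})]$. Then $$\mathbb{E}[\hat{\mathcal{L}}(\mathcal{D})]=\mathcal{L}(\mathcal{D})\le\log P(\mathcal{D})\quad\text{and}\quad\mathbb{E}[\hat{\mathcal{L}}_k(\mathcal{D})]=\mathcal{L}_k(\mathcal{D})\le\log P(\mathcal{D}).$$ Further, $$\mathcal{L}(\mathcal{D})=\log P(\mathcal{D})-\sum_{i=1}^n\mathrm{KL}\big(P(\theta\mid\mathcal{D}_{<i})\,\|\,P(\theta\mid\mathcal{D}_{<i+1})\big).$$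
   Context: $\mathcal{D}_{<i}=(\mathcal{D}_j)_{j=1}^{i-1}$ with $\mathcal{D}_{<1}=\emptyset$. $P(\mathcal{D})=\int P(\mathcal{D}\mid\theta)P(\theta)d\theta$ is the marginal likelihood, so that $\log P(\mathcal{D})=\sum_i\log P(\mathcal{D}_i\mid\mathcal{D}_{<i})$ with $P(\mathcal{D}_i\mid\mathcal{D}_{<i})=\mathbb{E}_{\theta\sim P(\theta\mid\mathcal{D}_{<i})}P(\mathcal{D}_i\mid\theta)$. $\mathrm{KL}$ is the Kullback–Leibler divergence. *)

theory Defs
  imports "HOL-Probability.Probability"
begin

text \<open>Bayesian model: prior measure M on the parameter space, likelihood
  functions lik i (theta) = P(D_i | theta), data indexed 0-based i < n.
  D_{<i} = (D_j)_{j<i}.\<close>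

definition marg :: "'a measure \<Rightarrow> (nat \<Rightarrow> 'a \<Rightarrow> real) \<Rightarrow> nat \<Rightarrow> real" where
  "marg M lik i = (\<integral>\<theta>. (\<Prod>j<i. lik j \<theta>) \<partial>M)"

definition post :: "'a measure \<Rightarrow> (nat \<Rightarrow> 'a \<Rightarrow> real) \<Rightarrow> nat \<Rightarrow> 'a measure" where
  "post M lik i = density M (\<lambda>\<theta>. ennreal ((\<Prod>j<i. lik j \<theta>) / marg M lik i))"

text \<open>Natural-log KL divergence KL(P || Q) = E_P[ln dP/dQ].\<close>
definition KL :: "'a measure \<Rightarrow> 'a measure \<Rightarrow> real" where
  "KL P Q = KL_divergence (exp 1) Q P"

definition samples :: "'a measure \<Rightarrow> (nat \<Rightarrow> 'a \<Rightarrow> real) \<Rightarrow> nat \<Rightarrow> nat \<Rightarrow> (nat \<times> nat \<Rightarrow> 'a) measure" where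
  "samples M lik n k = PiM ({..<n} \<times> {..<k}) (\<lambda>(i,j). post M lik i)"

definition Lhat :: "(nat \<Rightarrow> 'a \<Rightarrow> real) \<Rightarrow> nat \<Rightarrow> nat \<Rightarrow> (nat \<times> nat \<Rightarrow> 'a) \<Rightarrow> real" where
  "Lhat lik n k \<omega> = (\<Sum>i<n. (1 / real k) * (\<Sum>j<k. ln (lik i (\<omega> (i,j)))))"

definition Lhat_k :: "(nat \<Rightarrow> 'a \<Rightarrow> real) \<Rightarrow> nat \<Rightarrow> nat \<Rightarrow> (nat \<times> nat \<Rightarrow> 'a) \<Rightarrow> real" where
  "Lhat_k lik n k \<omega> = (\<Sum>i<n. ln ((1 / real k) * (\<Sum>j<k. lik i (\<omega> (i,j)))))"

definition L :: "'a measure \<Rightarrow> (nat \<Rightarrow> 'a \<Rightarrow> real) \<Rightarrow> nat \<Rightarrow> real" where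
  "L M lik n = (\<Sum>i<n. \<integral>\<theta>. ln (lik i \<theta>) \<partial>(post M lik i))"

definition L_k :: "'a measure \<Rightarrow> (nat \<Rightarrow> 'a \<Rightarrow> real) \<Rightarrow> nat \<Rightarrow> nat \<Rightarrow> real" where
  "L_k M lik n k = (\<integral>\<omega>. Lhat_k lik n k \<omega> \<partial>(samples M lik n k))"

end

theory Submission
  imports Defs
begin

text \<open>The predictive probability \<open>p\<^sub>i = P(D\<^sub>i | D_{<i}) = marg (i+1) / marg i\<close> is the
  posterior mean of \<open>lik i\<close>, and the \<open>p\<^sub>i\<close> multiply to \<open>P(D)\<close>. Jensen's inequality for the
  concave \<open>ln\<close> bounds the posterior mean of \<open>ln (lik i)\<close> by \<open>ln p\<^sub>i\<close>; the gap is exactly the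
  KL divergence, because \<open>post i\<close> has density \<open>p\<^sub>i / lik i\<close> with respect to \<open>post (i+1)\<close>.
  Each sample is distributed as its posterior, so \<open>Lhat\<close> is unbiased by linearity, and the
  sample mean of the likelihoods has expectation \<open>p\<^sub>i\<close>, so Jensen applies again.\<close>

lemma (in prob_space) integral_ln_le_ln_integral:
  fixes f :: "'a \<Rightarrow> real"
  assumes "integrable M f" "AE x in M. 0 < f x" "integrable M (\<lambda>x. ln (f x))"
  shows "(\<integral>x. ln (f x) \<partial>M) \<le> ln (\<integral>x. f x \<partial>M)"
proof -
  have "- ln (\<integral>x. f x \<partial>M) \<le> (\<integral>x. - ln (f x) \<partial>M)"
    using assms ln_concave unfolding concave_on_def
    by (intro jensens_inequality[where I="{0<..}" and a=0]) auto
  then show ?thesis by simp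
qed

lemma (in finite_measure) integrable_ln_of_lower_bound:
  fixes f g :: "'a \<Rightarrow> real"
  assumes f: "integrable M f" "AE x in M. 0 < f x"
    and g: "integrable M g" "AE x in M. g x \<le> ln (f x)"
  shows "integrable M (\<lambda>x. ln (f x))"
proof (rule Bochner_Integration.integrable_bound)
  show "integrable M (\<lambda>x. \<bar>f x - 1\<bar> + \<bar>g x\<bar>)"
    using f g by auto
  show "(\<lambda>x. ln (f x)) \<in> borel_measurable M"
    using borel_measurable_integrable[OF f(1)] by measurable
  show "AE x in M. norm (ln (f x)) \<le> norm (\<bar>f x - 1\<bar> + \<bar>g x\<bar>)"
    using f(2) g(2) by eventually_elim (use ln_le_minus_one in fastforce)
qed

lemma
  fixes f :: "'b \<Rightarrow> real"
  assumes N: "\<And>x. x \<in> I \<Longrightarrow> prob_space (N x)" and x: "x \<in> I"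
    and f: "f \<in> borel_measurable (N x)"
  shows integrable_PiM_component_iff:
      "integrable (PiM I N) (\<lambda>\<omega>. f (\<omega> x)) \<longleftrightarrow> integrable (N x) f"
    and integral_PiM_component: "(\<integral>\<omega>. f (\<omega> x) \<partial>PiM I N) = integral\<^sup>L (N x) f"
proof -
  have "(\<lambda>\<omega>. \<omega> x) \<in> measurable (PiM I N) (N x)"
    using x by (rule measurable_component_singleton)
  note distr = integrable_distr_eq[OF this f] integral_distr[OF this f]
  then show "integrable (PiM I N) (\<lambda>\<omega>. f (\<omega> x)) \<longleftrightarrow> integrable (N x) f"
    and "(\<integral>\<omega>. f (\<omega> x) \<partial>PiM I N) = integral\<^sup>L (N x) f"
    using distr_PiM_component[of I N x] N x by simp_all
qed

definition predictive :: "'a measure \<Rightarrow> (nat \<Rightarrow> 'a \<Rightarrow> real) \<Rightarrow> nat \<Rightarrow> real" where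
  "predictive M lik i = marg M lik (Suc i) / marg M lik i"

definition sample_mean :: "(nat \<Rightarrow> 'a \<Rightarrow> real) \<Rightarrow> nat \<Rightarrow> nat \<Rightarrow> (nat \<times> nat \<Rightarrow> 'a) \<Rightarrow> real" where
  "sample_mean lik k i \<omega> = (1 / real k) * (\<Sum>j<k. lik i (\<omega> (i,j)))"

lemma sets_post [simp]: "sets (post M lik i) = sets M"
  unfolding post_def by simp

lemma space_post [simp]: "space (post M lik i) = space M"
  unfolding post_def by simp

lemma borel_measurable_post_iff [simp]:
  "f \<in> borel_measurable (post M lik i) \<longleftrightarrow> f \<in> borel_measurable M"
  by (simp add: measurable_cong_sets[OF sets_post refl])

locale bayes_model = prob_space M for M :: "'a measure" +
  fixes lik :: "nat \<Rightarrow> 'a \<Rightarrow> real" and n :: nat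
  assumes borel_measurable_lik [measurable]: "i < n \<Longrightarrow> lik i \<in> borel_measurable M"
    and lik_pos: "i < n \<Longrightarrow> \<theta> \<in> space M \<Longrightarrow> 0 < lik i \<theta>"
    and integrable_prod_lik: "i \<le> n \<Longrightarrow> integrable M (\<lambda>\<theta>. \<Prod>j<i. lik j \<theta>)"
begin

lemma prod_lik_pos: "i \<le> n \<Longrightarrow> \<theta> \<in> space M \<Longrightarrow> 0 < (\<Prod>j<i. lik j \<theta>)"
  by (intro prod_pos) (auto intro: lik_pos)

lemma borel_measurable_prod_lik: "i \<le> n \<Longrightarrow> (\<lambda>\<theta>. \<Prod>j<i. lik j \<theta>) \<in> borel_measurable M"
  by (intro borel_measurable_prod) auto

lemma marg_0: "marg M lik 0 = 1"
  by (simp add: marg_def prob_space)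

lemma marg_pos: "i \<le> n \<Longrightarrow> 0 < marg M lik i"
  unfolding marg_def
  by (intro expectation_greater integrable_prod_lik AE_I2 prod_lik_pos)

lemma predictive_pos: "i < n \<Longrightarrow> 0 < predictive M lik i"
  by (simp add: predictive_def marg_pos)

lemma ln_marg_eq_sum_ln_predictive:
  "ln (marg M lik n) = (\<Sum>i<n. ln (predictive M lik i))"
proof -
  have "(\<Sum>i<n. ln (predictive M lik i)) = (\<Sum>i<n. ln (marg M lik (Suc i)) - ln (marg M lik i))"
  proof (intro sum.cong refl)
    fix i assume "i \<in> {..<n}"
    then have "0 < marg M lik i" "0 < marg M lik (Suc i)" by (simp_all add: marg_pos)
    then show "ln (predictive M lik i) = ln (marg M lik (Suc i)) - ln (marg M lik i)"
      by (simp add: predictive_def ln_div)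
  qed
  also have "\<dots> = ln (marg M lik n)"
    using sum_lessThan_telescope[of "\<lambda>i. ln (marg M lik i)" n] by (simp add: marg_0)
  finally show ?thesis ..
qed

lemma
  assumes "i \<le> n" and [measurable]: "f \<in> borel_measurable M"
  shows integrable_post_iff:
      "integrable (post M lik i) f
        \<longleftrightarrow> integrable M (\<lambda>\<theta>. (\<Prod>j<i. lik j \<theta>) / marg M lik i * f \<theta>)"
    and integral_post:
      "integral\<^sup>L (post M lik i) f = (\<integral>\<theta>. (\<Prod>j<i. lik j \<theta>) / marg M lik i * f \<theta> \<partial>M)"
proof -
  have [measurable]: "(\<lambda>\<theta>. \<Prod>j<i. lik j \<theta>) \<in> borel_measurable M"
    using assms(1) by (rule borel_measurable_prod_lik)
  have "AE \<theta> in M. 0 \<le> (\<Prod>j<i. lik j \<theta>) / marg M lik i"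
    using assms(1) prod_lik_pos marg_pos by (intro AE_I2 divide_nonneg_pos less_imp_le) auto
  note density = integrable_density[OF _ _ this] integral_density[OF _ _ this]
  show "integrable (post M lik i) f
        \<longleftrightarrow> integrable M (\<lambda>\<theta>. (\<Prod>j<i. lik j \<theta>) / marg M lik i * f \<theta>)"
    and "integral\<^sup>L (post M lik i) f = (\<integral>\<theta>. (\<Prod>j<i. lik j \<theta>) / marg M lik i * f \<theta> \<partial>M)"
    unfolding post_def by (simp_all add: density)
qed

lemma prob_space_post:
  assumes "i \<le> n" shows "prob_space (post M lik i)"
proof (rule prob_spaceI)
  let ?g = "\<lambda>\<theta>. (\<Prod>j<i. lik j \<theta>) / marg M lik i"
  have "emeasure (post M lik i) (space (post M lik i)) = (\<integral>\<^sup>+\<theta>. ennreal (?g \<theta>) \<partial>M)"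
    using borel_measurable_prod_lik[OF assms] by (simp add: post_def emeasure_density)
  also have "\<dots> = ennreal (\<integral>\<theta>. ?g \<theta> \<partial>M)"
    using assms integrable_prod_lik prod_lik_pos marg_pos
    by (intro nn_integral_eq_integral AE_I2 divide_nonneg_pos less_imp_le) auto
  also have "(\<integral>\<theta>. ?g \<theta> \<partial>M) = 1"
    using marg_pos[OF assms] by (simp add: marg_def)
  finally show "emeasure (post M lik i) (space (post M lik i)) = 1"
    by simp
qed

lemma
  assumes "i < n"
  shows integrable_post_lik: "integrable (post M lik i) (lik i)"
    and integral_post_lik: "integral\<^sup>L (post M lik i) (lik i) = predictive M lik i"
proof -
  have eq: "(\<lambda>\<theta>. (\<Prod>j<i. lik j \<theta>) / marg M lik i * lik i \<theta>)
      = (\<lambda>\<theta>. (\<Prod>j<Suc i. lik j \<theta>) / marg M lik i)"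
    by (simp add: fun_eq_iff)
  have i: "i \<le> n" using assms by simp
  have "integrable M (\<lambda>\<theta>. (\<Prod>j<i. lik j \<theta>) / marg M lik i * lik i \<theta>)"
    unfolding eq using assms integrable_prod_lik[of "Suc i"] by simp
  then show "integrable (post M lik i) (lik i)"
    using integrable_post_iff[OF i borel_measurable_lik[OF assms]] by simp
  show "integral\<^sup>L (post M lik i) (lik i) = predictive M lik i"
    unfolding integral_post[OF i borel_measurable_lik[OF assms]] eq
    by (simp add: predictive_def marg_def)
qed

lemma integral_post_ln_lik_le:
  assumes "i < n" and "integrable (post M lik i) (\<lambda>\<theta>. ln (lik i \<theta>))"
  shows "(\<integral>\<theta>. ln (lik i \<theta>) \<partial>post M lik i) \<le> ln (predictive M lik i)"
proof -
  interpret post: prob_space "post M lik i"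
    using assms(1) by (intro prob_space_post) simp
  have "AE \<theta> in post M lik i. 0 < lik i \<theta>"
    using assms(1) by (intro AE_I2) (simp add: lik_pos)
  then show ?thesis
    using post.integral_ln_le_ln_integral[OF integrable_post_lik[OF assms(1)] _ assms(2)]
    by (simp add: integral_post_lik[OF assms(1)])
qed

lemma KL_post_Suc:
  assumes "i < n" and "integrable (post M lik i) (\<lambda>\<theta>. ln (lik i \<theta>))"
  shows "KL (post M lik i) (post M lik (Suc i))
    = ln (predictive M lik i) - (\<integral>\<theta>. ln (lik i \<theta>) \<partial>post M lik i)"
proof -
  define g where "g j \<theta> = (\<Prod>l<j. lik l \<theta>) / marg M lik j" for j \<theta>
  have i: "i \<le> n" "Suc i \<le> n" using assms(1) by auto
  interpret post: prob_space "post M lik i" using i(1) by (rule prob_space_post)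
  have g_pos: "0 < g j \<theta>" if "j \<le> n" "\<theta> \<in> space M" for j \<theta>
    unfolding g_def using that by (simp add: prod_lik_pos marg_pos)
  have [measurable]: "g j \<in> borel_measurable M" if "j \<le> n" for j
    unfolding g_def using borel_measurable_prod_lik[OF that] by measurable
  have log_ratio: "log (exp 1) (g i \<theta> / g (Suc i) \<theta>) = ln (predictive M lik i) - ln (lik i \<theta>)"
    if "\<theta> \<in> space M" for \<theta>
  proof -
    have "g i \<theta> / g (Suc i) \<theta> = predictive M lik i / lik i \<theta>"
      using prod_lik_pos[OF i(1) that] lik_pos[OF assms(1) that] marg_pos[OF i(1)] marg_pos[OF i(2)]
      by (simp add: g_def predictive_def field_simps del: prod_zero_iff)
    then show ?thesis
      using predictive_pos[OF assms(1)] lik_pos[OF assms(1) that] by (simp add: log_ln[symmetric] ln_div)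
  qed
  have "KL (post M lik i) (post M lik (Suc i)) = (\<integral>\<theta>. g i \<theta> * log (exp 1) (g i \<theta> / g (Suc i) \<theta>) \<partial>M)"
    unfolding KL_def post_def g_def[symmetric]
    using i g_pos by (intro KL_density_density AE_I2 impI less_imp_le) (auto simp: less_le)
  also have "\<dots> = (\<integral>\<theta>. g i \<theta> * (ln (predictive M lik i) - ln (lik i \<theta>)) \<partial>M)"
    by (intro Bochner_Integration.integral_cong refl) (simp add: log_ratio)
  also have "\<dots> = (\<integral>\<theta>. ln (predictive M lik i) - ln (lik i \<theta>) \<partial>post M lik i)"
    using assms(1) by (simp add: integral_post g_def)
  also have "\<dots> = ln (predictive M lik i) - (\<integral>\<theta>. ln (lik i \<theta>) \<partial>post M lik i)"
    using assms(2) post.prob_space by (simp add: Bochner_Integration.integral_diff)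
  finally show ?thesis .
qed

lemma L_le_ln_marg:
  assumes "\<And>i. i < n \<Longrightarrow> integrable (post M lik i) (\<lambda>\<theta>. ln (lik i \<theta>))"
  shows "L M lik n \<le> ln (marg M lik n)"
  unfolding L_def ln_marg_eq_sum_ln_predictive
  using assms by (intro sum_mono integral_post_ln_lik_le) auto

lemma L_eq_ln_marg_minus_sum_KL:
  assumes "\<And>i. i < n \<Longrightarrow> integrable (post M lik i) (\<lambda>\<theta>. ln (lik i \<theta>))"
  shows "L M lik n = ln (marg M lik n) - (\<Sum>i<n. KL (post M lik i) (post M lik (Suc i)))"
  unfolding L_def ln_marg_eq_sum_ln_predictive
  using assms by (simp add: KL_post_Suc sum_subtractf)

lemma prob_sample_in_space: "prob_space (samples M lik n k)"
  unfolding samples_def by (intro prob_space_PiM) (auto intro: prob_space_post)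

lemma sample_in_space: "\<omega> \<in> space (samples M lik n k) \<Longrightarrow> i < n \<Longrightarrow> j < k \<Longrightarrow> \<omega> (i,j) \<in> space M"
  by (fastforce simp: samples_def space_PiM PiE_iff)

lemma
  fixes f :: "'a \<Rightarrow> real"
  assumes "i < n" "j < k" "f \<in> borel_measurable M"
  shows integrable_samples_component_iff:
      "integrable (samples M lik n k) (\<lambda>\<omega>. f (\<omega> (i,j))) \<longleftrightarrow> integrable (post M lik i) f"
    and integral_samples_component:
      "(\<integral>\<omega>. f (\<omega> (i,j)) \<partial>samples M lik n k) = integral\<^sup>L (post M lik i) f"
  using integrable_PiM_component_iff[of "{..<n} \<times> {..<k}" "\<lambda>(i,j). post M lik i" "(i,j)" f]
    integral_PiM_component[of "{..<n} \<times> {..<k}" "\<lambda>(i,j). post M lik i" "(i,j)" f]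
    assms prob_space_post
  unfolding samples_def by auto

lemma integral_Lhat:
  assumes "k \<ge> 1" and ln_lik: "\<And>i. i < n \<Longrightarrow> integrable (post M lik i) (\<lambda>\<theta>. ln (lik i \<theta>))"
  shows "(\<integral>\<omega>. Lhat lik n k \<omega> \<partial>samples M lik n k) = L M lik n"
proof -
  have int: "integrable (samples M lik n k) (\<lambda>\<omega>. ln (lik i (\<omega> (i,j))))"
    and eq: "(\<integral>\<omega>. ln (lik i (\<omega> (i,j))) \<partial>samples M lik n k) = (\<integral>\<theta>. ln (lik i \<theta>) \<partial>post M lik i)"
    if "i < n" "j < k" for i j
  proof -
    have "(\<lambda>\<theta>. ln (lik i \<theta>)) \<in> borel_measurable M"
      using that(1) by measurable
    note component = integrable_samples_component_iff[OF that this] integral_samples_component[OF that this]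
    show "integrable (samples M lik n k) (\<lambda>\<omega>. ln (lik i (\<omega> (i,j))))"
      and "(\<integral>\<omega>. ln (lik i (\<omega> (i,j))) \<partial>samples M lik n k) = (\<integral>\<theta>. ln (lik i \<theta>) \<partial>post M lik i)"
      using ln_lik[OF that(1)] by (simp_all add: component)
  qed
  have "(\<integral>\<omega>. Lhat lik n k \<omega> \<partial>samples M lik n k)
      = (\<Sum>i<n. (1 / real k) * (\<Sum>j<k. \<integral>\<omega>. ln (lik i (\<omega> (i,j))) \<partial>samples M lik n k))"
    unfolding Lhat_def using int
    by (subst Bochner_Integration.integral_sum)
       (auto intro!: sum.cong integrable_mult_right Bochner_Integration.integrable_sum
         simp: Bochner_Integration.integral_sum)
  also have "\<dots> = L M lik n"
    using assms(1) by (simp add: eq L_def)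
  finally show ?thesis .
qed

lemma
  assumes "k \<ge> 1" "i < n"
  shows integrable_sample_mean: "integrable (samples M lik n k) (sample_mean lik k i)"
    and integral_sample_mean: "integral\<^sup>L (samples M lik n k) (sample_mean lik k i) = predictive M lik i"
proof -
  have int: "integrable (samples M lik n k) (\<lambda>\<omega>. lik i (\<omega> (i,j)))"
    and eq: "(\<integral>\<omega>. lik i (\<omega> (i,j)) \<partial>samples M lik n k) = predictive M lik i" if "j < k" for j
    using integrable_samples_component_iff[OF assms(2) that borel_measurable_lik[OF assms(2)]]
      integral_samples_component[OF assms(2) that borel_measurable_lik[OF assms(2)]]
      integrable_post_lik[OF assms(2)] integral_post_lik[OF assms(2)]
    by simp_all
  show "integrable (samples M lik n k) (sample_mean lik k i)"
    unfolding sample_mean_def using int by (intro integrable_mult_right Bochner_Integration.integrable_sum) auto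
  show "integral\<^sup>L (samples M lik n k) (sample_mean lik k i) = predictive M lik i"
    unfolding sample_mean_def using int eq assms(1) by (simp add: Bochner_Integration.integral_sum)
qed

lemma
  assumes "k \<ge> 1" "i < n" "integrable (post M lik i) (\<lambda>\<theta>. ln (lik i \<theta>))"
  shows integrable_ln_sample_mean: "integrable (samples M lik n k) (\<lambda>\<omega>. ln (sample_mean lik k i \<omega>))"
    and integral_ln_sample_mean_le:
      "(\<integral>\<omega>. ln (sample_mean lik k i \<omega>) \<partial>samples M lik n k) \<le> ln (predictive M lik i)"
proof -
  interpret samples: prob_space "samples M lik n k" by (rule prob_sample_in_space)
  \<comment> \<open>The sample mean dominates its first term divided by \<open>k\<close>, which gives an integrable
    lower bound for its logarithm.\<close>
  have lower: "ln (lik i (\<omega> (i,0))) - ln (real k) \<le> ln (sample_mean lik k i \<omega>)"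
    and pos: "0 < sample_mean lik k i \<omega>"
    if "\<omega> \<in> space (samples M lik n k)" for \<omega>
  proof -
    have lik_pos_j: "0 < lik i (\<omega> (i,j))" if "j < k" for j
      using lik_pos[OF assms(2) sample_in_space] \<open>\<omega> \<in> _\<close> assms(2) that by blast
    have "lik i (\<omega> (i,0)) \<le> (\<Sum>j<k. lik i (\<omega> (i,j)))"
      using assms(1) lik_pos_j by (intro member_le_sum[where f="\<lambda>j. lik i (\<omega> (i,j))"]) (auto intro: less_imp_le)
    then have le: "lik i (\<omega> (i,0)) / real k \<le> sample_mean lik k i \<omega>"
      by (simp add: sample_mean_def divide_right_mono)
    moreover have gt: "0 < lik i (\<omega> (i,0)) / real k"
      using assms(1) lik_pos_j by simp
    ultimately show "0 < sample_mean lik k i \<omega>"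
      by linarith
    have "ln (lik i (\<omega> (i,0))) - ln (real k) = ln (lik i (\<omega> (i,0)) / real k)"
      using assms(1) lik_pos_j[of 0] by (simp add: ln_div)
    also have "\<dots> \<le> ln (sample_mean lik k i \<omega>)"
      using gt le by simp
    finally show "ln (lik i (\<omega> (i,0))) - ln (real k) \<le> ln (sample_mean lik k i \<omega>)" .
  qed
  have ln_lik: "(\<lambda>\<theta>. ln (lik i \<theta>)) \<in> borel_measurable M"
    using assms(2) by measurable
  have "integrable (samples M lik n k) (\<lambda>\<omega>. ln (lik i (\<omega> (i,0))))"
    using assms integrable_samples_component_iff[OF assms(2) _ ln_lik, of 0] by simp
  then have "integrable (samples M lik n k) (\<lambda>\<omega>. ln (lik i (\<omega> (i,0))) - ln (real k))"
    by simp
  then show "integrable (samples M lik n k) (\<lambda>\<omega>. ln (sample_mean lik k i \<omega>))"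
    using integrable_sample_mean[OF assms(1,2)] lower pos
    by (intro samples.integrable_ln_of_lower_bound AE_I2)
  then show "(\<integral>\<omega>. ln (sample_mean lik k i \<omega>) \<partial>samples M lik n k) \<le> ln (predictive M lik i)"
    using samples.integral_ln_le_ln_integral[OF integrable_sample_mean[OF assms(1,2)]] pos
      integral_sample_mean[OF assms(1,2)]
    by (simp add: AE_I2)
qed

lemma L_k_le_ln_marg:
  assumes "k \<ge> 1" "\<And>i. i < n \<Longrightarrow> integrable (post M lik i) (\<lambda>\<theta>. ln (lik i \<theta>))"
  shows "L_k M lik n k \<le> ln (marg M lik n)"
proof -
  have "L_k M lik n k = (\<Sum>i<n. \<integral>\<omega>. ln (sample_mean lik k i \<omega>) \<partial>samples M lik n k)"
    unfolding L_k_def Lhat_k_def sample_mean_def[symmetric]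
    using assms integrable_ln_sample_mean by (intro Bochner_Integration.integral_sum) auto
  also have "\<dots> \<le> ln (marg M lik n)"
    unfolding ln_marg_eq_sum_ln_predictive
    using assms integral_ln_sample_mean_le by (intro sum_mono) auto
  finally show ?thesis .
qed

end

theorem proposition4p1:
  fixes M :: "'a measure" and lik :: "nat \<Rightarrow> 'a \<Rightarrow> real" and n k :: nat
  assumes "prob_space M"
    and "k \<ge> 1"
    and "\<And>i. i < n \<Longrightarrow> lik i \<in> borel_measurable M"
    and "\<And>i \<theta>. i < n \<Longrightarrow> \<theta> \<in> space M \<Longrightarrow> lik i \<theta> > 0"
    and "\<And>i. i \<le> n \<Longrightarrow> integrable M (\<lambda>\<theta>. \<Prod>j<i. lik j \<theta>)"
    and "\<And>i. i < n \<Longrightarrow> integrable (post M lik i) (\<lambda>\<theta>. ln (lik i \<theta>))"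
  shows "(\<integral>\<omega>. Lhat lik n k \<omega> \<partial>(samples M lik n k)) = L M lik n
       \<and> L M lik n \<le> ln (marg M lik n)
       \<and> (\<integral>\<omega>. Lhat_k lik n k \<omega> \<partial>(samples M lik n k)) = L_k M lik n k
       \<and> L_k M lik n k \<le> ln (marg M lik n)
       \<and> L M lik n = ln (marg M lik n) - (\<Sum>i<n. KL (post M lik i) (post M lik (Suc i)))"
proof -
  interpret bayes_model M lik n
    using assms(1,3-5) by (intro bayes_model.intro bayes_model_axioms.intro) auto
  show ?thesis
    using integral_Lhat[OF assms(2,6)] L_le_ln_marg[OF assms(6)] L_k_le_ln_marg[OF assms(2,6)]
      L_eq_ln_marg_minus_sum_KL[OF assms(6)]
    by (simp add: L_k_def)
qed

end
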